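(* Let $H\subseteq\mathbb N$ be a numerical semigroup and $R=k[[H]]=k[[t^h\mid h\in H]]\subseteq k[[t]]$ the numerical semigroup ring over a field $k$. Write $H=\{a_0=0<a_1<a_2<\cdots\}$ and let $n$ be the smallest integer with $a_{n+i}=a_n+i$ for all $i\ge 0$; assume $n\ge 3$. With $I_i$, $\mathcal T(R)$, $\mathcal I(R)$ as in the context, the following are equivalent: (1) $\mathcal T(R)=\mathcal I(R)$; (2) $I_iI_{i+2}=t^{a_i}I_{i+2}$ for all $i\in\{1,\dots,n-2\}$; (3) $a_j+a_{i+1}-a_i\in H$ for all $i\in\{1,\dots,n-2\}$ and $j\in\{i+2,\dots,n\}$. If $k$ is infinite, these are also equivalent to: (4) $\mathcal T(R)$ is a finite set.
   Context: $v$ denotes the $t$-adic order valuation on $k((t))$ (so $v(R\setminus\{0\})=H$). For $0\le i\le n$, $I_i=\{r\in R\mid v(r)\ge a_i\}$ and $\mathcal I(R)=\{I_0,\dots,I_n\}$. The trace ideal of an $R$-module $M$ is $\mathrm{tr}_R(M)=\sum_{f\in\mathrm{Hom}_R(M,R)}\mathrm{Im} f$; an ideal is a trace ideal if it is $\mathrm{tr}_R(M)$ for some $M$. $\mathcal T(R)$ is the set of nonzero trace ideals of $R$. *)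

theory Defs
  imports "HOL-Algebra.Ideal_Product" "HOL-Algebra.Module"
    "HOL-Computational_Algebra.Formal_Power_Series" "HOL-Library.Infinite_Set"
begin

definition numerical_semigroup :: "nat set \<Rightarrow> bool" where
  "numerical_semigroup H \<longleftrightarrow> 0 \<in> H \<and> (\<forall>x\<in>H. \<forall>y\<in>H. x + y \<in> H) \<and> finite (UNIV - H)"

definition sg_elem :: "nat set \<Rightarrow> nat \<Rightarrow> nat" where
  "sg_elem H i = enumerate H i"

definition sg_n :: "nat set \<Rightarrow> nat" where
  "sg_n H = (LEAST n. \<forall>i. sg_elem H (n + i) = sg_elem H n + i)"

definition sg_carrier :: "nat set \<Rightarrow> 'k::field fps set" where
  "sg_carrier H = {f. \<forall>m. m \<notin> H \<longrightarrow> fps_nth f m = 0}"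

definition sg_ring :: "nat set \<Rightarrow> ('k::field fps) ring" where
  "sg_ring H = \<lparr> carrier = sg_carrier H, Group.monoid.mult = (*), Group.monoid.one = 1, zero = 0, add = (+) \<rparr>"

definition sg_self_module :: "nat set \<Rightarrow> ('k::field fps, 'k fps) module" where
  "sg_self_module H = \<lparr> carrier = sg_carrier H, Group.monoid.mult = (*), Group.monoid.one = 1, zero = 0, add = (+),
                        smult = (*) \<rparr>"

text \<open>t-adic order valuation; v(0) = infinity is handled by allowing r = 0.\<close>
definition sg_ideal_I :: "nat set \<Rightarrow> nat \<Rightarrow> 'k::field fps set" where
  "sg_ideal_I H i = {r \<in> sg_carrier H. r = 0 \<or> subdegree r \<ge> sg_elem H i}"

definition sg_calI :: "nat set \<Rightarrow> 'k::field fps set set" where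
  "sg_calI H = {sg_ideal_I H i | i. i \<le> sg_n H}"

definition lin_hom :: "('a, 'c) ring_scheme \<Rightarrow> ('a, 'b, 'd) module_scheme
                        \<Rightarrow> ('a, 'e, 'f) module_scheme \<Rightarrow> ('b \<Rightarrow> 'e) set" where
  "lin_hom R M N = {f. f \<in> carrier M \<rightarrow> carrier N \<and>
      (\<forall>x\<in>carrier M. \<forall>y\<in>carrier M. f (x \<oplus>\<^bsub>M\<^esub> y) = f x \<oplus>\<^bsub>N\<^esub> f y) \<and>
      (\<forall>a\<in>carrier R. \<forall>x\<in>carrier M. f (a \<odot>\<^bsub>M\<^esub> x) = a \<odot>\<^bsub>N\<^esub> f x)}"

definition trace_ideal_of :: "nat set \<Rightarrow> ('k::field fps, 'b, 'd) module_scheme \<Rightarrow> 'k fps set" where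
  "trace_ideal_of H M = genideal (sg_ring H)
      (\<Union>f \<in> lin_hom (sg_ring H) M (sg_self_module H). f ` carrier M)"

text \<open>Nonzero trace ideals. Modules are taken with carrier in the type 'k fps; this
  loses nothing, since every trace ideal I satisfies I = tr_R(I) and I is such a module.\<close>
definition sg_calT :: "nat set \<Rightarrow> 'k::field fps set set" where
  "sg_calT H = {I. I \<noteq> {0} \<and>
      (\<exists>M :: ('k fps, 'k fps) module. Module.module (sg_ring H) M \<and> I = trace_ideal_of H M)}"

end

theory Submission
  imports Defs
begin

text \<open>
  A nonzero ideal J of R is a trace ideal iff \<open>\<phi>(J) \<subseteq> J\<close> for every \<open>\<phi> \<in> Hom\<^sub>R(J, R)\<close>.
  If J contains the conductor ideal \<open>I\<^sub>n\<close>, every such \<open>\<phi>\<close> is multiplication by a power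
  series, so each \<open>I\<^sub>l\<close> is a trace ideal. Conversely, let J be a trace ideal and \<open>f \<in> J\<close> of
  minimal valuation \<open>a\<^sub>i\<close>: whenever \<open>x g / f \<in> R\<close> for all \<open>x \<in> J\<close>, the map
  \<open>x \<mapsto> x g / f\<close> shows \<open>g \<in> J\<close>. This gives \<open>I\<^sub>n \<subseteq> J\<close>. Condition (3) is
  equivalent to the translations by \<open>a\<^sub>k - a\<^sub>i\<close> (\<open>k \<ge> i \<ge> 1\<close>) preserving the valuations
  of \<open>I\<^sub>i\<^sub>+\<^sub>2\<close>; then the same maps give \<open>I\<^sub>i\<^sub>+\<^sub>2 \<subseteq> J\<close> and an element of
  valuation \<open>a\<^sub>i\<^sub>+\<^sub>1\<close> in J, whence \<open>J = I\<^sub>i\<close>. Condition (2) is this translation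
  condition tested on monomials. If (3) fails at \<open>(i, j)\<close>, the ideals
  \<open>(t\<^bsup>a\<^sub>i\<^esup> + \<lambda> t\<^bsup>a\<^sub>i\<^sub>+\<^sub>1\<^esup>) R + I\<^sub>i\<^sub>+\<^sub>2\<close>, \<open>\<lambda> \<in> k\<close>, are pairwise
  distinct trace ideals, and for \<open>\<lambda> \<noteq> 0\<close> none of them is an \<open>I\<^sub>l\<close>.
\<close>

unbundle fps_syntax

section \<open>Supports of power series\<close>

definition fps_support :: "'a::zero fps \<Rightarrow> nat set" where
  "fps_support f = {k. f $ k \<noteq> 0}"

lemma in_fps_support [simp]: "k \<in> fps_support f \<longleftrightarrow> f $ k \<noteq> 0"
  by (simp add: fps_support_def)

lemma fps_support_0 [simp]: "fps_support 0 = {}"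
  by auto

lemma fps_support_add: "fps_support (f + g) \<subseteq> fps_support f \<union> fps_support (g :: 'a::monoid_add fps)"
  by auto

lemma fps_support_X_power: "fps_support (fps_X ^ n :: 'a::comm_ring_1 fps) = {n}"
  by (auto simp: fps_X_power_iff split: if_splits)

lemma fps_support_mult:
  fixes f g :: "'a::semiring_0 fps"
  assumes "fps_support f \<subseteq> A" "fps_support g \<subseteq> B" "\<And>a b. a \<in> A \<Longrightarrow> b \<in> B \<Longrightarrow> a + b \<in> C"
  shows "fps_support (f * g) \<subseteq> C"
proof
  fix k assume "k \<in> fps_support (f * g)"
  then have "(\<Sum>i=0..k. f $ i * g $ (k - i)) \<noteq> 0" by (simp add: fps_mult_nth)
  then obtain i where "i \<le> k" "f $ i \<noteq> 0" "g $ (k - i) \<noteq> 0"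
    by (metis (no_types, lifting) atLeastAtMost_iff mult_not_zero sum.neutral)
  with assms show "k \<in> C" by (metis in_fps_support le_add_diff_inverse subsetD)
qed

lemma fps_vanishes_below_iff: "(f = 0 \<or> n \<le> subdegree f) \<longleftrightarrow> (\<forall>k. f $ k \<noteq> 0 \<longrightarrow> n \<le> k)"
proof (cases "f = 0")
  case False
  show ?thesis
  proof
    assume "f = 0 \<or> n \<le> subdegree f"
    then show "\<forall>k. f $ k \<noteq> 0 \<longrightarrow> n \<le> k" using False subdegree_leI by fastforce
  next
    assume "\<forall>k. f $ k \<noteq> 0 \<longrightarrow> n \<le> k"
    then show "f = 0 \<or> n \<le> subdegree f" using False nth_subdegree_nonzero by blast
  qed
qed simp

lemma obtain_fps_dvd_all:
  fixes A :: "'a::field fps set"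
  assumes "x \<in> A" "x \<noteq> 0"
  obtains f where "f \<in> A" "f \<noteq> 0" "\<And>y. y \<in> A \<Longrightarrow> f dvd y"
proof -
  obtain f where f: "f \<in> A \<and> f \<noteq> 0"
    and least: "\<And>y. y \<in> A \<and> y \<noteq> 0 \<Longrightarrow> subdegree f \<le> subdegree y"
    using ex_has_least_nat[of "\<lambda>y. y \<in> A \<and> y \<noteq> 0" x subdegree] assms by blast
  have "f dvd y" if "y \<in> A" for y
    using f least[of y] that by (cases "y = 0") (auto simp: fps_dvd_iff)
  with f that show ?thesis by blast
qed

lemma fps_support_inverse:
  fixes u :: "'a::field fps"
  assumes T0: "0 \<in> T" and T_add: "\<And>x y. x \<in> T \<Longrightarrow> y \<in> T \<Longrightarrow> x + y \<in> T"
    and u: "fps_support u \<subseteq> T" and u0: "u $ 0 \<noteq> 0"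
  shows "fps_support (inverse u) \<subseteq> T"
proof -
  have "inverse u $ k = 0" if "k \<notin> T" for k
    using that
  proof (induction k rule: less_induct)
    case (less k)
    have "k > 0" using less.prems T0 by (cases k) auto
    have vanish: "u $ i * inverse u $ (k - i) = 0" if "i \<in> {1..k}" for i
    proof (cases "u $ i = 0")
      case False
      then have "i \<in> T" using u by auto
      then have "k - i \<notin> T" using T_add[of i "k - i"] less.prems that by auto
      then show ?thesis using less.IH that by simp
    qed simp
    have "0 = (u * inverse u) $ k" using inverse_mult_eq_1'[OF u0] \<open>k > 0\<close> by simp
    also have "\<dots> = u $ 0 * inverse u $ k + (\<Sum>i=1..k. u $ i * inverse u $ (k - i))"
      by (simp add: fps_mult_nth sum.atLeast_Suc_atMost)
    also have "(\<Sum>i=1..k. u $ i * inverse u $ (k - i)) = 0" using vanish by (intro sum.neutral) blast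
    finally show ?case using u0 by simp
  qed
  then show ?thesis by (metis in_fps_support subsetI)
qed

lemma fps_divide_eq_shift_mult_inverse:
  fixes x f :: "'a::field fps"
  assumes "f dvd x"
  shows "x div f = fps_shift (subdegree f) x * inverse (unit_factor f)"
proof (cases "x = 0 \<or> f = 0")
  case False
  then have "subdegree f \<le> subdegree x" using assms dvd_imp_subdegree_le by blast
  then show ?thesis by (simp add: fps_divide_def fps_shift_mult_right_noncomm)
qed (use assms in auto)

section \<open>Numerical semigroups\<close>

definition add_stabilizer :: "nat set \<Rightarrow> nat set" where
  "add_stabilizer A = {e. \<forall>a\<in>A. e + a \<in> A}"

lemma zero_in_add_stabilizer: "0 \<in> add_stabilizer A"
  by (simp add: add_stabilizer_def)

lemma add_in_add_stabilizer:
  "d \<in> add_stabilizer A \<Longrightarrow> e \<in> add_stabilizer A \<Longrightarrow> d + e \<in> add_stabilizer A"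
  by (simp add: add_stabilizer_def add.assoc)

abbreviation sg_conductor :: "nat set \<Rightarrow> nat" where
  "sg_conductor H \<equiv> sg_elem H (sg_n H)"

definition sg_ge :: "nat set \<Rightarrow> nat \<Rightarrow> nat set" where
  "sg_ge H l = {h \<in> H. sg_elem H l \<le> h}"

definition sg_step_condition :: "nat set \<Rightarrow> bool" where
  "sg_step_condition H \<longleftrightarrow> (\<forall>i \<in> {1..sg_n H - 2}. \<forall>j \<in> {i + 2..sg_n H}.
      sg_elem H j + sg_elem H (i + 1) - sg_elem H i \<in> H)"

text \<open>Condition (2) at index i, in terms of valuations.\<close>
definition sg_product_condition :: "nat set \<Rightarrow> nat \<Rightarrow> bool" where
  "sg_product_condition H i \<longleftrightarrow>
     (\<forall>y \<in> sg_ge H i. y - sg_elem H i \<in> add_stabilizer (sg_ge H (i + 2)))"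

locale num_semigroup =
  fixes H :: "nat set"
  assumes numerical: "numerical_semigroup H"
begin

lemma sg_zero_in: "0 \<in> H" and sg_add_in: "x \<in> H \<Longrightarrow> y \<in> H \<Longrightarrow> x + y \<in> H"
  using numerical by (auto simp: numerical_semigroup_def)

lemma sg_eventually_in: "\<exists>N. \<forall>x\<ge>N. x \<in> H"
proof -
  have "finite (UNIV - H)" using numerical by (simp add: numerical_semigroup_def)
  then obtain N where "\<forall>x\<in>UNIV - H. x < N" by (metis finite_nat_set_iff_bounded)
  then show ?thesis by (metis DiffI UNIV_I leD)
qed

lemma sg_infinite: "infinite H"
proof
  assume "finite H"
  then obtain M where "\<forall>x\<in>H. x < M" by (metis finite_nat_set_iff_bounded)
  moreover obtain N where "\<forall>x\<ge>N. x \<in> H" using sg_eventually_in by blast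
  ultimately have "M + N < M" by (meson le_add2)
  then show False by simp
qed

lemma sg_elem_in: "sg_elem H i \<in> H"
  unfolding sg_elem_def using sg_infinite by (rule enumerate_in_set)

lemma sg_elem_less_iff [simp]: "sg_elem H i < sg_elem H j \<longleftrightarrow> i < j"
  and sg_elem_le_iff [simp]: "sg_elem H i \<le> sg_elem H j \<longleftrightarrow> i \<le> j"
  and sg_elem_eq_iff [simp]: "sg_elem H i = sg_elem H j \<longleftrightarrow> i = j"
  unfolding sg_elem_def using sg_infinite by (auto simp: strict_mono_less_eq strict_mono_enumerate
      strict_mono_eq)

lemma sg_elem_cases:
  assumes "h \<in> H"
  obtains i where "h = sg_elem H i"
  using assms sg_infinite enumerate_Ex unfolding sg_elem_def by metis

lemma sg_elem_0 [simp]: "sg_elem H 0 = 0"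
proof -
  obtain i where "0 = sg_elem H i" using sg_zero_in sg_elem_cases by blast
  then have "sg_elem H 0 \<le> 0" using sg_elem_le_iff[of 0 i] by simp
  then show ?thesis by simp
qed

lemma sg_elem_Suc_le: "h \<in> H \<Longrightarrow> sg_elem H l < h \<Longrightarrow> sg_elem H (Suc l) \<le> h"
  by (metis Suc_leI sg_elem_cases sg_elem_le_iff sg_elem_less_iff)

lemma sg_elem_sg_n_add: "sg_elem H (sg_n H + i) = sg_conductor H + i"
proof -
  obtain N where N: "\<forall>x\<ge>N. x \<in> H" using sg_eventually_in by blast
  then obtain n where n: "N = sg_elem H n" using sg_elem_cases by blast
  have "sg_elem H (n + i) = N + i" for i
  proof (induction i)
    case (Suc i)
    have "sg_elem H (Suc (n + i)) \<le> N + Suc i" using Suc N by (intro sg_elem_Suc_le) auto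
    moreover have "sg_elem H (n + i) < sg_elem H (Suc (n + i))" by simp
    ultimately show ?case using Suc by simp
  qed (simp add: n)
  then have "\<exists>n. \<forall>i. sg_elem H (n + i) = sg_elem H n + i" using n by auto
  then have "\<forall>i. sg_elem H (sg_n H + i) = sg_conductor H + i" unfolding sg_n_def by (rule LeastI_ex)
  then show ?thesis by blast
qed

lemma ge_conductor_in: "sg_conductor H \<le> x \<Longrightarrow> x \<in> H"
  using sg_elem_sg_n_add[of "x - sg_conductor H"] sg_elem_in by (metis le_add_diff_inverse)

lemma conductor_minus_one_notin:
  assumes "1 \<le> sg_n H"
  shows "sg_conductor H - 1 \<notin> H"
proof
  let ?n = "sg_n H"
  assume in_H: "sg_conductor H - 1 \<in> H"
  have n: "Suc (?n - 1) = ?n" using assms by simp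
  have "0 < sg_conductor H" using assms sg_elem_less_iff[of 0 ?n] by simp
  have "sg_elem H (?n - 1) < sg_conductor H" using assms by simp
  moreover have "\<not> sg_elem H (?n - 1) < sg_conductor H - 1"
    using sg_elem_Suc_le[OF in_H, of "?n - 1"] n by auto
  ultimately have prev: "sg_elem H (?n - 1) = sg_conductor H - 1" by linarith
  have "\<forall>i. sg_elem H (?n - 1 + i) = sg_elem H (?n - 1) + i"
  proof
    fix i show "sg_elem H (?n - 1 + i) = sg_elem H (?n - 1) + i"
      using sg_elem_sg_n_add[of "i - 1"] prev assms \<open>0 < sg_conductor H\<close> by (cases i) auto
  qed
  then have "?n \<le> ?n - 1" unfolding sg_n_def by (rule Least_le)
  then show False using assms by simp
qed

lemma sg_ge_Suc: "sg_ge H (Suc l) = sg_ge H l - {sg_elem H l}"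
proof -
  have "sg_elem H (Suc l) \<le> h \<longleftrightarrow> sg_elem H l \<le> h \<and> h \<noteq> sg_elem H l" if "h \<in> H" for h
    using sg_elem_Suc_le[OF that, of l] sg_elem_less_iff[of l "Suc l"] by linarith
  then show ?thesis unfolding sg_ge_def by auto
qed

lemma sg_ge_antimono: "l \<le> l' \<Longrightarrow> sg_ge H l' \<subseteq> sg_ge H l"
  unfolding sg_ge_def by (auto intro: le_trans[of "sg_elem H l" "sg_elem H l'"])

text \<open>For indices beyond those in (3), z already lies above the conductor.\<close>
lemma sg_step_condition_step:
  assumes cond: "sg_step_condition H" and k: "1 \<le> k" and z: "z \<in> sg_ge H (k + 2)"
  shows "z + sg_elem H (k + 1) - sg_elem H k \<in> H"
proof -
  have le: "z \<le> z + sg_elem H (k + 1) - sg_elem H k"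
    using sg_elem_less_iff[of k "k + 1"] by linarith
  obtain j where j: "z = sg_elem H j" using z sg_elem_cases unfolding sg_ge_def by blast
  then have "k + 2 \<le> j" using z unfolding sg_ge_def by simp
  show ?thesis
  proof (cases "j \<le> sg_n H")
    case True
    then have "k \<in> {1..sg_n H - 2}" "j \<in> {k + 2..sg_n H}" using k \<open>k + 2 \<le> j\<close> by auto
    then show ?thesis using cond j unfolding sg_step_condition_def by blast
  next
    case False
    then have "sg_conductor H \<le> z" using j by simp
    then show ?thesis using le by (intro ge_conductor_in) linarith
  qed
qed

text \<open>Induction on k with the invariant \<open>a\<^sub>k + x - a\<^sub>i \<in> sg_ge H (k + 2)\<close>; each step adds
  \<open>a\<^sub>k\<^sub>+\<^sub>1 - a\<^sub>k\<close>, which the previous lemma allows.\<close>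
lemma sg_step_condition_imp_product_condition:
  assumes cond: "sg_step_condition H" and i: "1 \<le> i"
  shows "sg_product_condition H i"
  unfolding sg_product_condition_def
proof
  fix y assume y: "y \<in> sg_ge H i"
  obtain k where k: "y = sg_elem H k" using y sg_elem_cases unfolding sg_ge_def by blast
  then have "i \<le> k" using y unfolding sg_ge_def by simp
  have shifted: "sg_elem H k + x - sg_elem H i \<in> sg_ge H (k + 2)" if x: "x \<in> sg_ge H (i + 2)" for x
    using \<open>i \<le> k\<close>
  proof (induction k rule: dec_induct)
    case base
    then show ?case using x by simp
  next
    case (step k)
    let ?z = "sg_elem H k + x - sg_elem H i" and ?w = "sg_elem H (Suc k) + x - sg_elem H i"
    have mono: "sg_elem H i \<le> sg_elem H k" "sg_elem H k < sg_elem H (k + 1)"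
      using step.hyps by simp_all
    have z_ge: "sg_elem H (k + 2) \<le> ?z" using step.IH unfolding sg_ge_def by blast
    have "?w = ?z + sg_elem H (k + 1) - sg_elem H k" using mono unfolding Suc_eq_plus1 by linarith
    then have w_in: "?w \<in> H"
      using sg_step_condition_step[OF cond _ step.IH] i step.hyps by simp
    have "sg_elem H (k + 2) < ?w" using z_ge mono unfolding Suc_eq_plus1 by linarith
    then have "sg_elem H (Suc (k + 2)) \<le> ?w" using sg_elem_Suc_le[OF w_in] by blast
    then show ?case using w_in unfolding sg_ge_def by simp
  qed
  have "y - sg_elem H i + x \<in> sg_ge H (i + 2)" if "x \<in> sg_ge H (i + 2)" for x
    using shifted[OF that] sg_ge_antimono[of "i + 2" "k + 2"] k \<open>i \<le> k\<close> by auto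
  then show "y - sg_elem H i \<in> add_stabilizer (sg_ge H (i + 2))" unfolding add_stabilizer_def
    by blast
qed

lemma sg_step_condition_iff:
  "sg_step_condition H \<longleftrightarrow> (\<forall>i \<in> {1..sg_n H - 2}. sg_product_condition H i)"
proof
  assume "\<forall>i \<in> {1..sg_n H - 2}. sg_product_condition H i"
  then have "sg_elem H (i + 1) - sg_elem H i + sg_elem H j \<in> H"
    if "i \<in> {1..sg_n H - 2}" "j \<in> {i + 2..sg_n H}" for i j
    using that sg_elem_in unfolding sg_product_condition_def add_stabilizer_def sg_ge_def by auto
  moreover have "sg_elem H i < sg_elem H (i + 1)" for i by simp
  ultimately show "sg_step_condition H"
    unfolding sg_step_condition_def by (metis Nat.diff_add_assoc2 add.commute less_imp_le)
qed (use sg_step_condition_imp_product_condition in auto)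

end

section \<open>The semigroup ring and the ideals \<open>I\<^sub>l\<close>\<close>

lemma sg_carrier_iff: "f \<in> sg_carrier H \<longleftrightarrow> fps_support f \<subseteq> H"
  by (auto simp: sg_carrier_def)

lemma sg_ring_simps [simp]:
  "carrier (sg_ring H) = sg_carrier H"
  "x \<otimes>\<^bsub>sg_ring H\<^esub> y = x * y"
  "\<one>\<^bsub>sg_ring H\<^esub> = 1"
  "\<zero>\<^bsub>sg_ring H\<^esub> = 0"
  "x \<oplus>\<^bsub>sg_ring H\<^esub> y = x + y"
  by (simp_all add: sg_ring_def)

lemma sg_self_module_simps [simp]:
  "carrier (sg_self_module H) = sg_carrier H"
  "x \<oplus>\<^bsub>sg_self_module H\<^esub> y = x + y"
  "a \<odot>\<^bsub>sg_self_module H\<^esub> x = a * x"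
  "\<zero>\<^bsub>sg_self_module H\<^esub> = 0"
  by (simp_all add: sg_self_module_def)

context num_semigroup
begin

lemma sg_carrier_add: "x \<in> sg_carrier H \<Longrightarrow> y \<in> sg_carrier H \<Longrightarrow> x + y \<in> sg_carrier H"
  and sg_carrier_diff: "x \<in> sg_carrier H \<Longrightarrow> y \<in> sg_carrier H \<Longrightarrow> x - y \<in> sg_carrier H"
  and sg_carrier_uminus: "x \<in> sg_carrier H \<Longrightarrow> - x \<in> sg_carrier H"
  and sg_carrier_const: "fps_const c \<in> sg_carrier H"
  for x y :: "'k::field fps"
  using sg_zero_in by (auto simp: sg_carrier_def)

lemma sg_carrier_mult:
  "x \<in> sg_carrier H \<Longrightarrow> y \<in> sg_carrier H \<Longrightarrow> (x * y :: 'k::field fps) \<in> sg_carrier H"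
  using fps_support_mult[of x H y H H] sg_add_in unfolding sg_carrier_iff by blast

lemma sg_carrier_X_power: "m \<in> H \<Longrightarrow> (fps_X ^ m :: 'k::field fps) \<in> sg_carrier H"
  by (simp add: sg_carrier_iff fps_support_X_power)

lemma cring_sg_ring: "cring (sg_ring H :: 'k::field fps ring)"
proof (rule cringI)
  show "abelian_group (sg_ring H :: 'k fps ring)"
    by (rule abelian_groupI) (auto simp: sg_carrier_add sg_carrier_const[of 0, simplified]
        algebra_simps intro!: bexI[of _ "- _"] sg_carrier_uminus)
  show "comm_monoid (sg_ring H :: 'k fps ring)"
    by (rule comm_monoidI)
      (auto simp: sg_carrier_mult sg_carrier_const[of 1, simplified] algebra_simps)
qed (simp add: algebra_simps)

lemma ideal_sg_ringI:
  assumes sub: "J \<subseteq> sg_carrier H" and zero: "0 \<in> J"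
    and add: "\<And>x y. x \<in> J \<Longrightarrow> y \<in> J \<Longrightarrow> x + y \<in> J"
    and mult: "\<And>r x. r \<in> sg_carrier H \<Longrightarrow> x \<in> J \<Longrightarrow> r * x \<in> J"
  shows "ideal J (sg_ring H :: 'k::field fps ring)"
proof -
  interpret cring "sg_ring H :: 'k fps ring" by (rule cring_sg_ring)
  have neg: "- x \<in> J" if "x \<in> J" for x
    using mult[OF sg_carrier_const[of "-1"] that]
      by (metis fps_const_1_eq_1 fps_const_neg mult_minus1)
  show ?thesis
  proof (rule idealI)
    show "subgroup J (add_monoid (sg_ring H :: 'k fps ring))"
    proof (rule subgroup.intro)
      fix x assume "x \<in> J"
      then have "\<ominus>\<^bsub>sg_ring H\<^esub> x = - x"
        using sub by (intro minus_equality) (auto simp: sg_carrier_uminus)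
      then show "inv\<^bsub>add_monoid (sg_ring H :: 'k fps ring)\<^esub> x \<in> J"
        using neg \<open>x \<in> J\<close> unfolding a_inv_def by simp
    qed (use sub zero add in auto)
    show "x \<otimes>\<^bsub>sg_ring H\<^esub> a \<in> J" "a \<otimes>\<^bsub>sg_ring H\<^esub> x \<in> J"
      if "a \<in> J" "x \<in> carrier (sg_ring H :: 'k fps ring)" for a x
      using mult[of x a] that by (simp_all add: mult.commute)
  qed (rule ring_axioms)
qed

lemma ideal_sg_ringD:
  assumes "ideal J (sg_ring H :: 'k::field fps ring)"
  shows "J \<subseteq> sg_carrier H" "0 \<in> J" "\<And>x y. x \<in> J \<Longrightarrow> y \<in> J \<Longrightarrow> x + y \<in> J"
    "\<And>r x. r \<in> sg_carrier H \<Longrightarrow> x \<in> J \<Longrightarrow> r * x \<in> J"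
    "\<And>x y. x \<in> J \<Longrightarrow> y \<in> J \<Longrightarrow> x - y \<in> J"
proof -
  interpret ideal J "sg_ring H :: 'k fps ring" by fact
  show sub: "J \<subseteq> sg_carrier H" using a_subset by simp
  show "0 \<in> J" using additive_subgroup.zero_closed[OF is_additive_subgroup] by simp
  show add: "\<And>x y. x \<in> J \<Longrightarrow> y \<in> J \<Longrightarrow> x + y \<in> J"
    using additive_subgroup.a_closed[OF is_additive_subgroup] by simp
  show mult: "\<And>r x. r \<in> sg_carrier H \<Longrightarrow> x \<in> J \<Longrightarrow> r * x \<in> J" using I_l_closed by simp
  have "- y \<in> J" if "y \<in> J" for y
    using mult[OF sg_carrier_const[of "-1"] that]
      by (metis fps_const_1_eq_1 fps_const_neg mult_minus1)
  then show "\<And>x y. x \<in> J \<Longrightarrow> y \<in> J \<Longrightarrow> x - y \<in> J" using add by (metis diff_conv_add_uminus)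
qed

lemma sg_ideal_I_iff: "f \<in> sg_ideal_I H l \<longleftrightarrow> fps_support f \<subseteq> sg_ge H l"
  unfolding sg_ideal_I_def sg_carrier_iff sg_ge_def fps_vanishes_below_iff by auto

lemma sg_ideal_I_iff_vanishes:
  "f \<in> sg_ideal_I H l \<longleftrightarrow> f \<in> sg_carrier H \<and> (\<forall>k<sg_elem H l. f $ k = 0)"
  unfolding sg_ideal_I_def fps_vanishes_below_iff by (auto simp: not_le[symmetric])

lemma sg_ideal_I_subset_carrier: "sg_ideal_I H l \<subseteq> sg_carrier H"
  by (auto simp: sg_ideal_I_def)

lemma sg_ideal_I_antimono:
  assumes "l \<le> l'"
  shows "sg_ideal_I H l' \<subseteq> sg_ideal_I H l"
proof
  fix f assume "f \<in> sg_ideal_I H l'"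
  then have "fps_support f \<subseteq> sg_ge H l'" by (simp add: sg_ideal_I_iff)
  also have "\<dots> \<subseteq> sg_ge H l" using assms by (rule sg_ge_antimono)
  finally show "f \<in> sg_ideal_I H l" by (simp add: sg_ideal_I_iff)
qed

lemma X_power_in_sg_ideal_I: "h \<in> sg_ge H l \<Longrightarrow> fps_X ^ h \<in> sg_ideal_I H l"
  by (simp add: sg_ideal_I_iff fps_support_X_power)

lemma X_power_sg_elem_in_sg_ideal_I: "fps_X ^ sg_elem H l \<in> sg_ideal_I H l"
  using sg_elem_in by (intro X_power_in_sg_ideal_I) (simp add: sg_ge_def)

lemma sg_ideal_I_Suc: "f \<in> sg_ideal_I H l \<Longrightarrow> f $ sg_elem H l = 0 \<Longrightarrow> f \<in> sg_ideal_I H (Suc l)"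
  by (auto simp: sg_ideal_I_iff sg_ge_Suc)

lemma sg_ideal_I_mult:
  assumes x: "x \<in> sg_ideal_I H l" and qx: "q * x \<in> sg_carrier H"
  shows "q * x \<in> sg_ideal_I H l"
proof -
  have "fps_support (q * x) \<subseteq> {sg_elem H l..}"
    by (rule fps_support_mult[of q UNIV x "sg_ge H l"])
      (use x in \<open>auto simp: sg_ideal_I_iff sg_ge_def\<close>)
  then show ?thesis using qx unfolding sg_ideal_I_iff sg_carrier_iff sg_ge_def by auto
qed

lemma ideal_sg_ideal_I: "ideal (sg_ideal_I H l :: 'k::field fps set) (sg_ring H)"
proof (rule ideal_sg_ringI)
  show "x + y \<in> sg_ideal_I H l" if "x \<in> sg_ideal_I H l" "y \<in> sg_ideal_I H l" for x y :: "'k fps"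
    using that fps_support_add[of x y] by (auto simp: sg_ideal_I_iff)
  show "r * x \<in> sg_ideal_I H l" if "r \<in> sg_carrier H" "x \<in> sg_ideal_I H l" for r x :: "'k fps"
  proof (rule sg_ideal_I_mult)
    show "x \<in> sg_ideal_I H l" by (fact that(2))
    then have "x \<in> sg_carrier H" using sg_ideal_I_subset_carrier by blast
    with that(1) show "r * x \<in> sg_carrier H" by (rule sg_carrier_mult)
  qed
qed (simp_all add: sg_ideal_I_iff sg_ideal_I_subset_carrier)

lemma sg_ideal_I_reduce:
  fixes x f :: "'k::field fps"
  assumes "x \<in> sg_ideal_I H l" "f \<in> sg_ideal_I H l" "f $ sg_elem H l \<noteq> 0"
  shows "x - fps_const (x $ sg_elem H l / f $ sg_elem H l) * f \<in> sg_ideal_I H (Suc l)"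
proof (rule sg_ideal_I_Suc)
  show "x - fps_const (x $ sg_elem H l / f $ sg_elem H l) * f \<in> sg_ideal_I H l"
    using ideal_sg_ringD(5)[OF ideal_sg_ideal_I assms(1)
        ideal_sg_ringD(4)[OF ideal_sg_ideal_I sg_carrier_const assms(2)]] .
  show "(x - fps_const (x $ sg_elem H l / f $ sg_elem H l) * f) $ sg_elem H l = 0"
    using assms(3) by simp
qed

lemma sg_ge_conductor: "sg_ge H (sg_n H) = {sg_conductor H..}"
  unfolding sg_ge_def using ge_conductor_in by auto

lemma mult_in_conductor_ideal:
  assumes "g \<in> sg_ideal_I H (sg_n H)"
  shows "h * g \<in> sg_ideal_I H (sg_n H)"
  unfolding sg_ideal_I_iff sg_ge_conductor
  by (rule fps_support_mult[of h UNIV]) (use assms in \<open>auto simp: sg_ideal_I_iff sg_ge_conductor\<close>)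

lemma sg_ideal_I_shift:
  "x \<in> sg_ideal_I H l \<Longrightarrow> fps_shift (sg_elem H l) x * fps_X ^ sg_elem H l = x"
  unfolding sg_ideal_I_def using fps_shift_times_fps_X_power by fastforce

end

section \<open>Trace ideals\<close>

abbreviation sg_ideal_module :: "nat set \<Rightarrow> 'k::field fps set \<Rightarrow> ('k fps, 'k fps) module" where
  "sg_ideal_module H J \<equiv> (sg_self_module H)\<lparr>carrier := J\<rparr>"

text \<open>For an ideal J, \<open>hom_closed H J\<close> says \<open>tr\<^sub>R(J) = J\<close>.\<close>
definition hom_closed :: "nat set \<Rightarrow> 'k::field fps set \<Rightarrow> bool" where
  "hom_closed H J \<longleftrightarrow>
     (\<forall>\<phi> \<in> lin_hom (sg_ring H) (sg_ideal_module H J) (sg_self_module H). \<phi> ` J \<subseteq> J)"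

lemma lin_hom_ideal_module_iff:
  "\<phi> \<in> lin_hom (sg_ring H) (sg_ideal_module H J) (sg_self_module H) \<longleftrightarrow>
     (\<forall>x\<in>J. \<phi> x \<in> sg_carrier H) \<and> (\<forall>x\<in>J. \<forall>y\<in>J. \<phi> (x + y) = \<phi> x + \<phi> y) \<and>
     (\<forall>a\<in>sg_carrier H. \<forall>x\<in>J. \<phi> (a * x) = a * \<phi> x)"
  unfolding lin_hom_def by (auto simp: sg_self_module_def)

lemma lin_hom_comp:
  assumes f: "f \<in> lin_hom (sg_ring H) M (sg_self_module H)" and f_into: "f ` carrier M \<subseteq> J"
    and \<phi>: "\<phi> \<in> lin_hom (sg_ring H) (sg_ideal_module H J) (sg_self_module H)"
  shows "\<phi> \<circ> f \<in> lin_hom (sg_ring H) M (sg_self_module H)"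
  using f f_into \<phi> unfolding lin_hom_def by (auto simp: sg_self_module_def Pi_iff image_subset_iff)

context num_semigroup
begin

lemma trace_ideal_of_ideal: "ideal (trace_ideal_of H M :: 'k::field fps set) (sg_ring H)"
  and trace_ideal_of_hom_closed: "hom_closed H (trace_ideal_of H M :: 'k fps set)"
proof -
  interpret R: cring "sg_ring H :: 'k fps ring" by (rule cring_sg_ring)
  define S where "S = (\<Union>f \<in> lin_hom (sg_ring H) M (sg_self_module H). f ` carrier M)"
  let ?I = "trace_ideal_of H M :: 'k fps set"
  have S_sub: "S \<subseteq> sg_carrier H" unfolding S_def lin_hom_def by auto
  have I: "?I = genideal (sg_ring H) S" unfolding trace_ideal_of_def S_def ..
  show ideal: "ideal ?I (sg_ring H)" unfolding I using S_sub by (intro R.genideal_ideal) simp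
  have S_I: "S \<subseteq> ?I" unfolding I using S_sub by (intro R.genideal_self) simp
  show "hom_closed H ?I"
    unfolding hom_closed_def
  proof
    fix \<phi> assume \<phi>: "\<phi> \<in> lin_hom (sg_ring H) (sg_ideal_module H ?I) (sg_self_module H)"
    note \<phi>_iff = \<phi>[unfolded lin_hom_ideal_module_iff]
    note I_closed = ideal_sg_ringD[OF ideal]
    define K where "K = {x \<in> ?I. \<phi> x \<in> ?I}"
    have "ideal K (sg_ring H)"
    proof (rule ideal_sg_ringI)
      have "\<phi> (0 + 0) = \<phi> 0 + \<phi> 0" using \<phi>_iff I_closed(2) by blast
      then have "\<phi> 0 = 0" by (metis add.right_neutral add_left_cancel)
      then show "0 \<in> K" using I_closed(2) unfolding K_def by simp
    qed (use I_closed \<phi>_iff in \<open>auto simp: K_def\<close>)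
    moreover have "S \<subseteq> K"
    proof
      fix s assume "s \<in> S"
      then obtain f m where f: "f \<in> lin_hom (sg_ring H) M (sg_self_module H)"
        and m: "m \<in> carrier M" and s: "s = f m" unfolding S_def by blast
      have "f ` carrier M \<subseteq> ?I" using S_I f unfolding S_def by blast
      then have "\<phi> \<circ> f \<in> lin_hom (sg_ring H) M (sg_self_module H)" by (rule lin_hom_comp[OF f _ \<phi>])
      then have "(\<phi> \<circ> f) m \<in> S" using m unfolding S_def by (intro UN_I imageI) auto
      then have "\<phi> (f m) \<in> S" by simp
      with S_I \<open>s \<in> S\<close> s show "s \<in> K" unfolding K_def by (simp add: subset_iff)
    qed
    ultimately have "?I \<subseteq> K" unfolding I by (rule R.genideal_minimal)
    then show "\<phi> ` ?I \<subseteq> ?I" unfolding K_def by blast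
  qed
qed

lemma module_sg_ideal_module:
  assumes "ideal J (sg_ring H :: 'k::field fps ring)"
  shows "Module.module (sg_ring H) (sg_ideal_module H J)"
proof -
  note J_closed = ideal_sg_ringD[OF assms]
  show ?thesis
  proof (rule moduleI)
    show "cring (sg_ring H :: 'k fps ring)" by (rule cring_sg_ring)
    show "abelian_group (sg_ideal_module H J)"
      by (rule abelian_groupI) (auto simp: sg_self_module_def J_closed algebra_simps
          intro!: bexI[of _ "- _"] J_closed(5)[of 0, simplified])
  qed (auto simp: sg_self_module_def J_closed algebra_simps)
qed

lemma trace_ideal_of_sg_ideal_module:
  assumes ideal: "ideal J (sg_ring H :: 'k::field fps ring)" and closed: "hom_closed H J"
  shows "trace_ideal_of H (sg_ideal_module H J) = J"
proof -
  interpret R: cring "sg_ring H :: 'k fps ring" by (rule cring_sg_ring)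
  note J_closed = ideal_sg_ringD[OF ideal]
  define S where "S = (\<Union>\<phi> \<in> lin_hom (sg_ring H) (sg_ideal_module H J) (sg_self_module H). \<phi> ` J)"
  have "id \<in> lin_hom (sg_ring H) (sg_ideal_module H J) (sg_self_module H)"
    using J_closed(1) by (auto simp: lin_hom_ideal_module_iff)
  then have "J \<subseteq> S" unfolding S_def by (intro subsetI UN_I[of id]) auto
  moreover have "S \<subseteq> J" using closed unfolding hom_closed_def S_def by blast
  ultimately have "S = J" by blast
  then have "trace_ideal_of H (sg_ideal_module H J) = genideal (sg_ring H) J"
    unfolding trace_ideal_of_def S_def by simp
  also have "\<dots> = J"
  proof
    show "genideal (sg_ring H) J \<subseteq> J" by (rule R.genideal_minimal[OF ideal order.refl])
    show "J \<subseteq> genideal (sg_ring H) J" using J_closed(1) by (intro R.genideal_self) simp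
  qed
  finally show ?thesis .
qed

lemma sg_calT_iff:
  "J \<in> sg_calT H \<longleftrightarrow> J \<noteq> {0} \<and> ideal J (sg_ring H) \<and> hom_closed H (J :: 'k::field fps set)"
proof
  assume "J \<in> sg_calT H"
  then show "J \<noteq> {0} \<and> ideal J (sg_ring H) \<and> hom_closed H J"
    unfolding sg_calT_def using trace_ideal_of_ideal trace_ideal_of_hom_closed by blast
next
  assume J: "J \<noteq> {0} \<and> ideal J (sg_ring H) \<and> hom_closed H J"
  then have "Module.module (sg_ring H) (sg_ideal_module H J)"
    and "J = trace_ideal_of H (sg_ideal_module H J)"
    using module_sg_ideal_module trace_ideal_of_sg_ideal_module by auto
  with J show "J \<in> sg_calT H" unfolding sg_calT_def by blast
qed

text \<open>Otherwise some \<open>t\<^sup>e g\<close> would have a nonzero coefficient at the gap \<open>c - 1\<close>.\<close>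
lemma conductor_power_factor:
  fixes g :: "'k::field fps"
  assumes n: "1 \<le> sg_n H" and shifts: "\<And>e. fps_X ^ e * g \<in> sg_carrier H"
  shows "g = fps_shift (sg_conductor H) g * fps_X ^ sg_conductor H"
proof -
  let ?c = "sg_conductor H"
  have "?c \<le> subdegree g" if "g \<noteq> 0"
  proof (rule ccontr)
    assume "\<not> ?c \<le> subdegree g"
    define e where "e = ?c - 1 - subdegree g"
    have "(fps_X ^ e * g) $ (?c - 1) = g $ subdegree g"
      using \<open>\<not> ?c \<le> subdegree g\<close> by (simp add: fps_X_power_mult_nth e_def)
    then have "?c - 1 \<in> H" using shifts[of e] that by (auto simp: sg_carrier_iff)
    with conductor_minus_one_notin n show False by blast
  qed
  then show ?thesis by (cases "g = 0") (simp_all add: fps_shift_times_fps_X_power)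
qed

text \<open>\<open>t\<^sup>c \<phi>(y) = y \<phi>(t\<^sup>c)\<close>, so \<open>\<phi>\<close> is multiplication by \<open>\<phi>(t\<^sup>c) / t\<^sup>c\<close>.\<close>
lemma lin_hom_is_mult:
  fixes J :: "'k::field fps set"
  assumes n: "1 \<le> sg_n H" and J_sub: "J \<subseteq> sg_carrier H" and conductor: "sg_ideal_I H (sg_n H) \<subseteq> J"
    and \<phi>: "\<phi> \<in> lin_hom (sg_ring H) (sg_ideal_module H J) (sg_self_module H)"
  obtains q where "\<And>y. y \<in> J \<Longrightarrow> \<phi> y = q * y"
proof -
  let ?c = "sg_conductor H"
  let ?P = "fps_X ^ ?c :: 'k fps"
  note \<phi>_iff = \<phi>[unfolded lin_hom_ideal_module_iff]
  have X_in: "fps_X ^ h \<in> J" if "?c \<le> h" for h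
    using conductor X_power_in_sg_ideal_I[of h "sg_n H"] that by (auto simp: sg_ge_conductor)
  have P_in: "?P \<in> sg_carrier H" using sg_elem_in by (rule sg_carrier_X_power)
  define g where "g = \<phi> ?P"
  have key: "?P * \<phi> y = y * g" if "y \<in> J" for y
  proof -
    have "\<phi> (?P * y) = ?P * \<phi> y" using \<phi>_iff that P_in by blast
    moreover have "\<phi> (y * ?P) = y * g" using \<phi>_iff that X_in[of ?c] J_sub unfolding g_def by blast
    ultimately show ?thesis by (simp add: mult.commute)
  qed
  have shifts: "fps_X ^ e * g \<in> sg_carrier H" for e
  proof -
    have "?P * \<phi> (fps_X ^ (?c + e)) = ?P * (fps_X ^ e * g)"
      using key[OF X_in[of "?c + e"]] by (simp add: power_add ac_simps)
    then have "\<phi> (fps_X ^ (?c + e)) = fps_X ^ e * g" by simp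
    moreover have "\<phi> (fps_X ^ (?c + e)) \<in> sg_carrier H" using \<phi>_iff X_in by simp
    ultimately show ?thesis by simp
  qed
  define q where "q = fps_shift ?c g"
  have "g = q * ?P" unfolding q_def using n shifts by (rule conductor_power_factor)
  then have "\<phi> y = q * y" if "y \<in> J" for y
    using key[OF that] by (simp add: ac_simps)
  with that show ?thesis by blast
qed

lemma sg_ideal_I_in_sg_calT:
  assumes n: "1 \<le> sg_n H" and l: "l \<le> sg_n H"
  shows "(sg_ideal_I H l :: 'k::field fps set) \<in> sg_calT H"
  unfolding sg_calT_iff
proof (intro conjI)
  have "fps_X ^ sg_elem H l \<in> (sg_ideal_I H l :: 'k fps set)"
    by (rule X_power_sg_elem_in_sg_ideal_I)
  then show "sg_ideal_I H l \<noteq> ({0} :: 'k fps set)" by auto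
  show "ideal (sg_ideal_I H l :: 'k fps set) (sg_ring H)" by (rule ideal_sg_ideal_I)
  show "hom_closed H (sg_ideal_I H l :: 'k fps set)"
    unfolding hom_closed_def
  proof (intro ballI image_subsetI)
    fix \<phi> :: "'k fps \<Rightarrow> 'k fps" and y :: "'k fps"
    assume \<phi>: "\<phi> \<in> lin_hom (sg_ring H) (sg_ideal_module H (sg_ideal_I H l)) (sg_self_module H)"
      and y: "y \<in> sg_ideal_I H l"
    obtain q where q: "\<And>y. y \<in> sg_ideal_I H l \<Longrightarrow> \<phi> y = q * y"
      using lin_hom_is_mult[OF n sg_ideal_I_subset_carrier sg_ideal_I_antimono[OF l] \<phi>] by blast
    have "\<phi> y \<in> sg_carrier H" using \<phi> y by (simp add: lin_hom_ideal_module_iff)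
    then show "\<phi> y \<in> sg_ideal_I H l" using q[OF y] sg_ideal_I_mult[OF y] by simp
  qed
qed

section \<open>Classification of the trace ideals under condition (3)\<close>

lemma fps_support_shift_subset_stabilizer:
  assumes "sg_product_condition H i" "x \<in> sg_ideal_I H i"
  shows "fps_support (fps_shift (sg_elem H i) x) \<subseteq> add_stabilizer (sg_ge H (i + 2))"
proof
  fix k assume "k \<in> fps_support (fps_shift (sg_elem H i) x)"
  then have "k + sg_elem H i \<in> sg_ge H i" using assms(2) by (auto simp: sg_ideal_I_iff)
  then show "k \<in> add_stabilizer (sg_ge H (i + 2))"
    using assms(1) unfolding sg_product_condition_def by fastforce
qed

lemma sg_carrier_subset_ideal:
  fixes J :: "'k::field fps set"
  assumes ideal: "ideal J (sg_ring H)" and f: "f \<in> J" "f $ 0 \<noteq> 0"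
  shows "sg_carrier H \<subseteq> J"
proof
  fix r :: "'k fps" assume r: "r \<in> sg_carrier H"
  note J_closed = ideal_sg_ringD[OF ideal]
  have "f \<in> sg_carrier H" using f(1) J_closed(1) by blast
  then have "fps_support (inverse f) \<subseteq> H"
    using sg_zero_in sg_add_in f(2) unfolding sg_carrier_iff by (intro fps_support_inverse)
  then have "inverse f \<in> sg_carrier H" by (simp only: sg_carrier_iff)
  then have "r * inverse f * f \<in> J" using J_closed(4)[OF sg_carrier_mult[OF r] f(1)] by blast
  then show "r \<in> J" using f(2) by (simp add: mult.assoc inverse_mult_eq_1)
qed

text \<open>The map \<open>x \<mapsto> x g / f\<close> is \<open>R\<close>-linear on \<open>J\<close> and sends \<open>f\<close> to \<open>g\<close>.\<close>
lemma hom_closed_divide: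
  fixes J :: "'k::field fps set"
  assumes J_sub: "J \<subseteq> sg_carrier H" and closed: "hom_closed H J"
    and f: "f \<in> J" "f \<noteq> 0" "\<And>x. x \<in> J \<Longrightarrow> f dvd x"
    and g: "\<And>x. x \<in> J \<Longrightarrow> x div f * g \<in> sg_carrier H"
  shows "g \<in> J"
proof -
  define \<phi> where "\<phi> x = x div f * g" for x
  have "\<phi> (a * x) = a * \<phi> x" if "x \<in> J" for a x
    using div_mult_swap[OF f(3)[OF that], of a] by (simp add: \<phi>_def mult.assoc)
  then have "\<phi> \<in> lin_hom (sg_ring H) (sg_ideal_module H J) (sg_self_module H)"
    unfolding lin_hom_ideal_module_iff using g by (simp add: \<phi>_def fps_divide_add distrib_right)
  then have "\<phi> f \<in> J" using closed f(1) unfolding hom_closed_def by blast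
  then show "g \<in> J" using f(2) by (simp add: \<phi>_def)
qed

lemma hom_closed_contains_conductor_ideal:
  fixes J :: "'k::field fps set"
  assumes ideal: "ideal J (sg_ring H)" and nonzero: "J \<noteq> {0}" and closed: "hom_closed H J"
  shows "sg_ideal_I H (sg_n H) \<subseteq> J"
proof
  fix g :: "'k fps" assume g: "g \<in> sg_ideal_I H (sg_n H)"
  note J_closed = ideal_sg_ringD[OF ideal]
  obtain x where "x \<in> J" "x \<noteq> 0" using nonzero J_closed(2) by blast
  then obtain f where f: "f \<in> J" "f \<noteq> 0" "\<And>y. y \<in> J \<Longrightarrow> f dvd y"
    using obtain_fps_dvd_all by blast
  show "g \<in> J"
  proof (rule hom_closed_divide[OF J_closed(1) closed f])
    show "x div f * g \<in> sg_carrier H" for x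
      using mult_in_conductor_ideal[OF g] sg_ideal_I_subset_carrier by blast
  qed
qed

lemma sg_ideal_I_subset_by_reduction:
  fixes J :: "'k::field fps set"
  assumes ideal: "ideal J (sg_ring H)"
    and f: "f \<in> J" "f \<in> sg_ideal_I H i" "f $ sg_elem H i \<noteq> 0"
    and e: "e \<in> J" "e \<in> sg_ideal_I H (i + 1)" "e $ sg_elem H (i + 1) \<noteq> 0"
    and tail: "sg_ideal_I H (i + 2) \<subseteq> J"
  shows "sg_ideal_I H i \<subseteq> J"
proof
  fix x :: "'k fps" assume x: "x \<in> sg_ideal_I H i"
  note J_closed = ideal_sg_ringD[OF ideal]
  define x1 where "x1 = x - fps_const (x $ sg_elem H i / f $ sg_elem H i) * f"
  define x2 where "x2 = x1 - fps_const (x1 $ sg_elem H (i + 1) / e $ sg_elem H (i + 1)) * e"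
  have "x1 \<in> sg_ideal_I H (i + 1)" unfolding x1_def using sg_ideal_I_reduce[OF x f(2,3)] by simp
  then have "x2 \<in> sg_ideal_I H (i + 2)" unfolding x2_def
    using sg_ideal_I_reduce[OF _ e(2,3)] by simp
  then have "x2 \<in> J" using tail by blast
  moreover have "x = x2 + fps_const (x1 $ sg_elem H (i + 1) / e $ sg_elem H (i + 1)) * e
      + fps_const (x $ sg_elem H i / f $ sg_elem H i) * f"
    unfolding x2_def x1_def by simp
  ultimately show "x \<in> J" using J_closed(3,4) sg_carrier_const e(1) f(1) by metis
qed

context
  fixes J :: "'k::field fps set" and f :: "'k fps" and i :: nat
  assumes prod: "sg_product_condition H i"
    and ideal: "ideal J (sg_ring H)" and closed: "hom_closed H J"
    and f: "f \<in> J" "f \<noteq> 0" "subdegree f = sg_elem H i" and J_sub: "J \<subseteq> sg_ideal_I H i"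
begin

lemma dvd_sg_ideal_I: "x \<in> sg_ideal_I H i \<Longrightarrow> f dvd x"
  using f(2,3) by (cases "x = 0") (auto simp: fps_dvd_iff sg_ideal_I_def)

lemma fps_support_inverse_unit_factor:
  "fps_support (inverse (unit_factor f)) \<subseteq> add_stabilizer (sg_ge H (i + 2))"
proof (rule fps_support_inverse)
  show "fps_support (unit_factor f) \<subseteq> add_stabilizer (sg_ge H (i + 2))"
    using fps_support_shift_subset_stabilizer[OF prod] f J_sub by auto
qed (use f(2) zero_in_add_stabilizer add_in_add_stabilizer in auto)

lemma fps_support_divide:
  assumes "x \<in> sg_ideal_I H i"
  shows "fps_support (x div f) \<subseteq> add_stabilizer (sg_ge H (i + 2))"
  unfolding fps_divide_eq_shift_mult_inverse[OF dvd_sg_ideal_I[OF assms]]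
  using fps_support_shift_subset_stabilizer[OF prod assms] fps_support_inverse_unit_factor f(3)
  by (intro fps_support_mult) (auto intro: add_in_add_stabilizer)

lemma divide_mult_X_power:
  "x \<in> sg_ideal_I H i \<Longrightarrow> x div f * fps_X ^ sg_elem H i = x * inverse (unit_factor f)"
  using sg_ideal_I_shift[of x i] f(3)
  by (simp add: fps_divide_eq_shift_mult_inverse dvd_sg_ideal_I ac_simps)

lemma sg_ideal_I_Suc_Suc_subset: "sg_ideal_I H (i + 2) \<subseteq> J"
proof
  fix y :: "'k fps" assume y: "y \<in> sg_ideal_I H (i + 2)"
  show "y \<in> J"
  proof (rule hom_closed_divide[OF _ closed f(1,2)])
    show "J \<subseteq> sg_carrier H" using J_sub sg_ideal_I_subset_carrier by blast
    show "f dvd x" if "x \<in> J" for x using that J_sub dvd_sg_ideal_I by blast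
    show "x div f * y \<in> sg_carrier H" if "x \<in> J" for x
    proof -
      have "x \<in> sg_ideal_I H i" using that J_sub by blast
      then have "fps_support (x div f * y) \<subseteq> sg_ge H (i + 2)"
        using fps_support_divide y
          by (intro fps_support_mult) (auto simp: sg_ideal_I_iff add_stabilizer_def)
      then show ?thesis unfolding sg_carrier_iff sg_ge_def by blast
    qed
  qed
qed

lemma divide_mult_X_power_Suc_in_carrier:
  assumes z: "z \<in> sg_ideal_I H (i + 2)"
  shows "z div f * fps_X ^ sg_elem H (i + 1) \<in> sg_carrier H"
proof -
  define d where "d = sg_elem H (i + 1) - sg_elem H i"
  have d: "d \<in> add_stabilizer (sg_ge H (i + 2))"
    using prod sg_elem_in unfolding d_def sg_product_condition_def sg_ge_def by simp
  have "z \<in> sg_ideal_I H i" using z sg_ideal_I_antimono[of i "i + 2"] by auto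
  moreover have "fps_X ^ sg_elem H (i + 1) = fps_X ^ sg_elem H i * (fps_X ^ d :: 'k fps)"
    unfolding d_def by (simp add: power_add[symmetric])
  ultimately have eq:
      "z div f * fps_X ^ sg_elem H (i + 1) = (z * fps_X ^ d) * inverse (unit_factor f)"
    using divide_mult_X_power by (simp add: ac_simps)
  have "fps_support (z * fps_X ^ d) \<subseteq> sg_ge H (i + 2)"
    using z d by (intro fps_support_mult) (auto simp: sg_ideal_I_iff fps_support_X_power
        add_stabilizer_def add.commute)
  then have "fps_support ((z * fps_X ^ d) * inverse (unit_factor f)) \<subseteq> sg_ge H (i + 2)"
    by (rule fps_support_mult[OF _ fps_support_inverse_unit_factor])
      (auto simp: add_stabilizer_def add.commute)
  then show ?thesis unfolding eq sg_carrier_iff sg_ge_def by blast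
qed

text \<open>If \<open>J\<close> had no element of valuation \<open>a\<^sub>i\<^sub>+\<^sub>1\<close>, then \<open>J \<subseteq> k f + I\<^sub>i\<^sub>+\<^sub>2\<close>,
  and dividing by \<open>f\<close> would put \<open>t\<^bsup>a\<^sub>i\<^sub>+\<^sub>1\<^esup>\<close> into \<open>J\<close>.\<close>
lemma obtain_valuation_Suc:
  obtains e where "e \<in> J" "e \<in> sg_ideal_I H (i + 1)" "e $ sg_elem H (i + 1) \<noteq> 0"
proof (rule ccontr)
  assume "\<not> thesis"
  with that have none: "e $ sg_elem H (i + 1) = 0" if "e \<in> J" "e \<in> sg_ideal_I H (i + 1)" for e
    using that by blast
  note J_closed = ideal_sg_ringD[OF ideal]
  have f_in: "f \<in> sg_ideal_I H i" and f_coeff: "f $ sg_elem H i \<noteq> 0"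
    using f J_sub by (auto simp: f(3)[symmetric])
  define \<mu> where "\<mu> x = x $ sg_elem H i / f $ sg_elem H i" for x
  have tail: "x - fps_const (\<mu> x) * f \<in> sg_ideal_I H (i + 2)" if x: "x \<in> J" for x
  proof -
    have in_J: "x - fps_const (\<mu> x) * f \<in> J" using J_closed(4,5) x f(1) sg_carrier_const by blast
    have in_I: "x - fps_const (\<mu> x) * f \<in> sg_ideal_I H (i + 1)"
      using sg_ideal_I_reduce[OF _ f_in f_coeff] x J_sub unfolding \<mu>_def by auto
    from sg_ideal_I_Suc[OF in_I none[OF in_J in_I]] show ?thesis by simp
  qed
  have "fps_X ^ sg_elem H (i + 1) \<in> J"
  proof (rule hom_closed_divide[OF _ closed f(1,2)])
    show "J \<subseteq> sg_carrier H" using J_sub sg_ideal_I_subset_carrier by blast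
    show "f dvd x" if "x \<in> J" for x using that J_sub dvd_sg_ideal_I by blast
    show "x div f * fps_X ^ sg_elem H (i + 1) \<in> sg_carrier H" if x: "x \<in> J" for x
    proof -
      define z where "z = x - fps_const (\<mu> x) * f"
      have "x div f = z div f + fps_const (\<mu> x)"
        unfolding z_def using f(2) by (simp add: fps_divide_diff fps_divide_times_eq)
      then have "x div f * fps_X ^ sg_elem H (i + 1)
          = z div f * fps_X ^ sg_elem H (i + 1) + fps_const (\<mu> x) * fps_X ^ sg_elem H (i + 1)"
        by (simp add: distrib_right)
      moreover have "z div f * fps_X ^ sg_elem H (i + 1) \<in> sg_carrier H"
        unfolding z_def using tail[OF x] by (rule divide_mult_X_power_Suc_in_carrier)
      ultimately show ?thesis
        by (simp add: sg_carrier_add sg_carrier_mult sg_carrier_const sg_carrier_X_power sg_elem_in)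
    qed
  qed
  moreover have "fps_X ^ sg_elem H (i + 1) \<in> sg_ideal_I H (i + 1)"
    by (rule X_power_sg_elem_in_sg_ideal_I)
  ultimately have "(fps_X ^ sg_elem H (i + 1) :: 'k fps) $ sg_elem H (i + 1) = 0" by (rule none)
  then show False by (simp add: fps_X_power_iff)
qed

end

lemma obtain_sg_ideal_I_containing:
  fixes J :: "'k::field fps set"
  assumes J_sub: "J \<subseteq> sg_carrier H" and f: "f \<in> J" "f \<noteq> 0" "\<And>y. y \<in> J \<Longrightarrow> f dvd y"
  obtains i where "subdegree f = sg_elem H i" "J \<subseteq> sg_ideal_I H i"
proof -
  have "f \<in> sg_carrier H" using f(1) J_sub by blast
  moreover have "f $ subdegree f \<noteq> 0" using f(2) by simp
  ultimately have "subdegree f \<in> H" unfolding sg_carrier_iff in_fps_support[symmetric] by blast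
  then obtain i where i: "subdegree f = sg_elem H i" by (rule sg_elem_cases)
  have "J \<subseteq> sg_ideal_I H i"
  proof
    fix x assume "x \<in> J"
    then have "f dvd x" by (rule f(3))
    then have "x = 0 \<or> sg_elem H i \<le> subdegree x" unfolding i[symmetric]
      using dvd_imp_subdegree_le by blast
    with \<open>x \<in> J\<close> J_sub show "x \<in> sg_ideal_I H i" unfolding sg_ideal_I_def by blast
  qed
  with i that show thesis by blast
qed

lemma hom_closed_ideal_eq_sg_ideal_I:
  fixes J :: "'k::field fps set"
  assumes cond: "sg_step_condition H" and ideal: "ideal J (sg_ring H)" and nonzero: "J \<noteq> {0}"
    and closed: "hom_closed H J"
  obtains l where "l \<le> sg_n H" "J = sg_ideal_I H l"
proof -
  note J_closed = ideal_sg_ringD[OF ideal]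
  obtain x where "x \<in> J" "x \<noteq> 0" using nonzero J_closed(2) by blast
  then obtain f where f: "f \<in> J" "f \<noteq> 0" "\<And>y. y \<in> J \<Longrightarrow> f dvd y"
    using obtain_fps_dvd_all by blast
  obtain i where i: "subdegree f = sg_elem H i" and J_sub: "J \<subseteq> sg_ideal_I H i"
    using J_closed(1) f by (rule obtain_sg_ideal_I_containing)
  have f_coeff: "f $ sg_elem H i \<noteq> 0" using f(2) unfolding i[symmetric] by simp
  have f_in: "f \<in> sg_ideal_I H i" using f(1) J_sub by blast
  have "sg_ideal_I H (sg_n H) \<subseteq> J"
    by (rule hom_closed_contains_conductor_ideal[OF ideal nonzero closed])
  moreover have "(fps_X ^ sg_conductor H :: 'k fps) \<in> sg_ideal_I H (sg_n H)"
    by (rule X_power_sg_elem_in_sg_ideal_I)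
  ultimately have "(fps_X ^ sg_conductor H :: 'k fps) \<in> sg_ideal_I H i" using J_sub by blast
  then have "i \<le> sg_n H" by (simp add: sg_ideal_I_iff fps_support_X_power sg_ge_def)
  have "sg_ideal_I H i \<subseteq> J"
  proof (cases "i = 0")
    case True
    then have "f $ 0 \<noteq> 0" using f_coeff by simp
    with ideal f(1) show ?thesis
      using sg_ideal_I_subset_carrier by (blast dest: sg_carrier_subset_ideal)
  next
    case False
    then have prod: "sg_product_condition H i"
      using cond by (intro sg_step_condition_imp_product_condition) simp_all
    obtain e where e: "e \<in> J" "e \<in> sg_ideal_I H (i + 1)" "e $ sg_elem H (i + 1) \<noteq> 0"
      using obtain_valuation_Suc[OF prod ideal closed f(1,2) i J_sub] .
    show ?thesis
      using sg_ideal_I_subset_by_reduction[OF ideal f(1) f_in f_coeff e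
          sg_ideal_I_Suc_Suc_subset[OF prod ideal closed f(1,2) i J_sub]] .
  qed
  then have "J = sg_ideal_I H i" using J_sub by (rule equalityI[rotated])
  with \<open>i \<le> sg_n H\<close> show thesis by (rule that)
qed

section \<open>The products \<open>I\<^sub>i I\<^sub>i\<^sub>+\<^sub>2\<close>\<close>

lemma X_power_mult_sg_ideal_I_subset_ideal_prod:
  "(\<lambda>x. fps_X ^ sg_elem H i * x) ` (sg_ideal_I H (i + 2) :: 'k::field fps set)
     \<subseteq> ideal_prod (sg_ring H) (sg_ideal_I H i) (sg_ideal_I H (i + 2))"
proof
  fix z :: "'k fps" assume "z \<in> (\<lambda>x. fps_X ^ sg_elem H i * x) ` sg_ideal_I H (i + 2)"
  then obtain w where w: "w \<in> sg_ideal_I H (i + 2)" and z: "z = fps_X ^ sg_elem H i * w" by blast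
  from ideal_prod.prod[OF X_power_sg_elem_in_sg_ideal_I w, of "sg_ring H"]
  show "z \<in> ideal_prod (sg_ring H) (sg_ideal_I H i) (sg_ideal_I H (i + 2))" using z by simp
qed

lemma ideal_prod_sg_ideal_I_subset:
  assumes cond: "sg_product_condition H i"
  shows "ideal_prod (sg_ring H) (sg_ideal_I H i) (sg_ideal_I H (i + 2))
     \<subseteq> (\<lambda>x. fps_X ^ sg_elem H i * x) ` (sg_ideal_I H (i + 2) :: 'k::field fps set)"
proof
  fix z :: "'k fps" assume "z \<in> ideal_prod (sg_ring H) (sg_ideal_I H i) (sg_ideal_I H (i + 2))"
  then show "z \<in> (\<lambda>x. fps_X ^ sg_elem H i * x) ` sg_ideal_I H (i + 2)"
  proof (induction rule: ideal_prod.induct)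
    case (prod u v)
    have "fps_support (fps_shift (sg_elem H i) u * v) \<subseteq> sg_ge H (i + 2)"
    proof (rule fps_support_mult[OF fps_support_shift_subset_stabilizer[OF cond prod(1)]])
      show "fps_support v \<subseteq> sg_ge H (i + 2)" using prod(2) by (simp add: sg_ideal_I_iff)
    qed (simp add: add_stabilizer_def)
    then have in_I: "fps_shift (sg_elem H i) u * v \<in> sg_ideal_I H (i + 2)"
      by (simp add: sg_ideal_I_iff)
    have "u \<otimes>\<^bsub>sg_ring H\<^esub> v = fps_X ^ sg_elem H i * (fps_shift (sg_elem H i) u * v)"
      using sg_ideal_I_shift[OF prod(1)] by (simp add: ac_simps)
    then show ?case by (rule image_eqI[OF _ in_I])
  next
    case (sum s1 s2)
    then obtain w1 w2 where "w1 \<in> sg_ideal_I H (i + 2)" "w2 \<in> sg_ideal_I H (i + 2)"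
      and "s1 = fps_X ^ sg_elem H i * w1" "s2 = fps_X ^ sg_elem H i * w2" by blast
    moreover have "w1 + w2 \<in> sg_ideal_I H (i + 2)"
      using ideal_sg_ringD(3)[OF ideal_sg_ideal_I] calculation(1,2) by blast
    ultimately show ?case by (intro image_eqI[of _ _ "w1 + w2"]) (simp_all add: distrib_left)
  qed
qed

text \<open>Test the inclusion on the monomials \<open>t\<^bsup>y\<^esup> t\<^bsup>x\<^esup>\<close>.\<close>
lemma product_condition_of_ideal_prod_subset:
  assumes sub: "ideal_prod (sg_ring H) (sg_ideal_I H i) (sg_ideal_I H (i + 2))
     \<subseteq> (\<lambda>x. fps_X ^ sg_elem H i * x) ` (sg_ideal_I H (i + 2) :: 'k::field fps set)"
  shows "sg_product_condition H i"
  unfolding sg_product_condition_def add_stabilizer_def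
proof (intro ballI CollectI)
  fix y x assume y: "y \<in> sg_ge H i" and x: "x \<in> sg_ge H (i + 2)"
  have "fps_X ^ y \<otimes>\<^bsub>sg_ring H\<^esub> fps_X ^ x
      \<in> ideal_prod (sg_ring H) (sg_ideal_I H i) (sg_ideal_I H (i + 2))"
    using X_power_in_sg_ideal_I[OF y] X_power_in_sg_ideal_I[OF x] by (rule ideal_prod.prod)
  then obtain w where w: "w \<in> sg_ideal_I H (i + 2)"
    and w_eq: "fps_X ^ (y + x) = fps_X ^ sg_elem H i * (w :: 'k fps)"
    using sub by (auto simp: power_add)
  have y_ge: "sg_elem H i \<le> y" using y unfolding sg_ge_def by blast
  have "(fps_X ^ sg_elem H i * w) $ (y + x) = 1" unfolding w_eq[symmetric]
    by (simp add: fps_X_power_iff)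
  then have "w $ (y + x - sg_elem H i) \<noteq> 0" using y_ge by (simp add: fps_X_power_mult_nth)
  then have "y + x - sg_elem H i \<in> sg_ge H (i + 2)" using w by (auto simp: sg_ideal_I_iff)
  then show "y - sg_elem H i + x \<in> sg_ge H (i + 2)" using y_ge by simp
qed

lemma ideal_prod_sg_ideal_I_iff:
  "ideal_prod (sg_ring H) (sg_ideal_I H i) (sg_ideal_I H (i + 2))
      = (\<lambda>x. fps_X ^ sg_elem H i * x) ` (sg_ideal_I H (i + 2) :: 'k::field fps set)
    \<longleftrightarrow> sg_product_condition H i"
  using X_power_mult_sg_ideal_I_subset_ideal_prod ideal_prod_sg_ideal_I_subset
    product_condition_of_ideal_prod_subset by (metis equalityD1 subset_antisym)

end

section \<open>Trace ideals that are not of the form \<open>I\<^sub>l\<close>\<close>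

definition sg_binomial :: "nat set \<Rightarrow> nat \<Rightarrow> 'k::field \<Rightarrow> 'k fps" where
  "sg_binomial H i c = fps_X ^ sg_elem H i + fps_const c * fps_X ^ sg_elem H (i + 1)"

text \<open>When \<open>a\<^sub>i\<^sub>+\<^sub>1 - a\<^sub>i \<notin> H\<close>, the maximal ideal times \<open>sg_binomial H i c\<close> lies in
  \<open>I\<^sub>i\<^sub>+\<^sub>2\<close>, so this is the ideal generated by \<open>sg_binomial H i c\<close> and \<open>I\<^sub>i\<^sub>+\<^sub>2\<close>.\<close>
definition sg_binomial_ideal :: "nat set \<Rightarrow> nat \<Rightarrow> 'k::field \<Rightarrow> 'k fps set" where
  "sg_binomial_ideal H i c = {fps_const \<mu> * sg_binomial H i c + y | \<mu> y. y \<in> sg_ideal_I H (i + 2)}"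

context num_semigroup
begin

lemma sg_binomial_nth:
  "sg_binomial H i c $ k = (if k = sg_elem H i then 1 else if k = sg_elem H (i + 1) then c else 0)"
  by (auto simp: sg_binomial_def fps_X_power_iff)

lemma sg_binomial_in_carrier: "(sg_binomial H i c :: 'k::field fps) \<in> sg_carrier H"
  unfolding sg_binomial_def
    by (intro sg_carrier_add sg_carrier_mult sg_carrier_const sg_carrier_X_power sg_elem_in)

lemma in_sg_binomial_ideal_iff:
  "x \<in> sg_binomial_ideal H i c \<longleftrightarrow> (\<exists>\<mu>. x - fps_const \<mu> * sg_binomial H i c \<in> sg_ideal_I H (i + 2))"
proof
  assume "x \<in> sg_binomial_ideal H i c"
  then obtain \<mu> y where "x = fps_const \<mu> * sg_binomial H i c + y" "y \<in> sg_ideal_I H (i + 2)"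
    unfolding sg_binomial_ideal_def by blast
  then show "\<exists>\<mu>. x - fps_const \<mu> * sg_binomial H i c \<in> sg_ideal_I H (i + 2)"
    by (intro exI[of _ \<mu>]) simp
next
  assume "\<exists>\<mu>. x - fps_const \<mu> * sg_binomial H i c \<in> sg_ideal_I H (i + 2)"
  then obtain \<mu> where "x - fps_const \<mu> * sg_binomial H i c \<in> sg_ideal_I H (i + 2)" by blast
  moreover have "x = fps_const \<mu> * sg_binomial H i c + (x - fps_const \<mu> * sg_binomial H i c)"
    by simp
  ultimately show "x \<in> sg_binomial_ideal H i c" unfolding sg_binomial_ideal_def by blast
qed

lemma sg_binomial_in_sg_binomial_ideal: "sg_binomial H i c \<in> sg_binomial_ideal H i (c :: 'k::field)"
  unfolding in_sg_binomial_ideal_iff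
    using ideal_sg_ringD(2)[OF ideal_sg_ideal_I] by (intro exI[of _ 1]) simp

lemma sg_ideal_I_subset_sg_binomial_ideal:
  "sg_ideal_I H (i + 2) \<subseteq> sg_binomial_ideal H i (c :: 'k::field)"
  unfolding in_sg_binomial_ideal_iff subset_iff by (intro allI impI exI[of _ 0]) simp

lemma sg_binomial_ideal_coeff:
  assumes "x \<in> sg_binomial_ideal H i (c :: 'k::field)"
  shows "x $ sg_elem H (i + 1) = c * x $ sg_elem H i"
proof -
  obtain \<mu> where y: "x - fps_const \<mu> * sg_binomial H i c \<in> sg_ideal_I H (i + 2)"
    using assms in_sg_binomial_ideal_iff by blast
  have "sg_elem H i < sg_elem H (i + 2)" "sg_elem H (i + 1) < sg_elem H (i + 2)" by simp_all
  then have "(x - fps_const \<mu> * sg_binomial H i c) $ sg_elem H i = 0"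
    "(x - fps_const \<mu> * sg_binomial H i c) $ sg_elem H (i + 1) = 0"
    using y unfolding sg_ideal_I_iff_vanishes by blast+
  then show ?thesis by (simp add: sg_binomial_nth)
qed

lemma sg_binomial_multiple_in_sg_ideal_I:
  fixes q :: "'k::field fps"
  assumes carrier: "(q - fps_const (q $ 0)) * sg_binomial H i c \<in> sg_carrier H"
    and gap: "q $ (sg_elem H (i + 1) - sg_elem H i) = 0"
  shows "(q - fps_const (q $ 0)) * sg_binomial H i c \<in> sg_ideal_I H (i + 2)"
proof -
  define q' where "q' = q - fps_const (q $ 0)"
  define w where "w = q' * sg_binomial H i c"
  have less: "sg_elem H i < sg_elem H (i + 1)" by simp
  have "w = fps_X ^ sg_elem H i * q' + fps_const c * (fps_X ^ sg_elem H (i + 1) * q')"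
    unfolding w_def sg_binomial_def by (simp add: algebra_simps)
  then have w_nth: "w $ k = (if sg_elem H i \<le> k then q' $ (k - sg_elem H i) else 0)
      + c * (if sg_elem H (i + 1) \<le> k then q' $ (k - sg_elem H (i + 1)) else 0)" for k
    by (simp add: fps_X_power_mult_nth)
  have "w \<in> sg_carrier H" using carrier by (simp add: w_def q'_def)
  moreover have "\<forall>k<sg_elem H i. w $ k = 0"
  proof (intro allI impI)
    fix k assume "k < sg_elem H i"
    then have "\<not> sg_elem H i \<le> k" "\<not> sg_elem H (i + 1) \<le> k" using less by linarith+
    then show "w $ k = 0" by (simp only: w_nth if_False) simp
  qed
  ultimately have "w \<in> sg_ideal_I H i" unfolding sg_ideal_I_iff_vanishes by blast
  moreover have "w $ sg_elem H i = 0" by (simp add: w_nth q'_def)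
  ultimately have "w \<in> sg_ideal_I H (Suc i)" by (rule sg_ideal_I_Suc)
  moreover have "w $ sg_elem H (Suc i) = 0" using less gap by (simp add: w_nth q'_def)
  ultimately have "w \<in> sg_ideal_I H (Suc (Suc i))" by (rule sg_ideal_I_Suc)
  then show ?thesis by (simp add: w_def q'_def)
qed

lemma mult_in_sg_binomial_ideal:
  fixes q :: "'k::field fps"
  assumes x: "x \<in> sg_binomial_ideal H i c"
    and q_g: "(q - fps_const (q $ 0)) * sg_binomial H i c \<in> sg_ideal_I H (i + 2)"
    and q_tail: "\<And>y. y \<in> sg_ideal_I H (i + 2) \<Longrightarrow> q * y \<in> sg_ideal_I H (i + 2)"
  shows "q * x \<in> sg_binomial_ideal H i c"
proof -
  note tail = ideal_sg_ringD[OF ideal_sg_ideal_I[of "i + 2"]]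
  obtain \<mu> where y: "x - fps_const \<mu> * sg_binomial H i c \<in> sg_ideal_I H (i + 2)"
    using x unfolding in_sg_binomial_ideal_iff by blast
  from tail(3)[OF tail(4)[OF sg_carrier_const[of \<mu>] q_g] q_tail[OF y]]
  have "q * x - fps_const (\<mu> * q $ 0) * sg_binomial H i c \<in> sg_ideal_I H (i + 2)"
    by (simp del: fps_const_mult add: fps_const_mult[symmetric] algebra_simps)
  then show ?thesis unfolding in_sg_binomial_ideal_iff by blast
qed

lemma sg_elem_diff_notin:
  assumes "sg_elem H j + sg_elem H (i + 1) - sg_elem H i \<notin> H"
  shows "sg_elem H (i + 1) - sg_elem H i \<notin> H"
proof
  assume "sg_elem H (i + 1) - sg_elem H i \<in> H"
  then have "sg_elem H j + (sg_elem H (i + 1) - sg_elem H i) \<in> H" by (rule sg_add_in[OF sg_elem_in])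
  moreover have "sg_elem H i < sg_elem H (i + 1)" by simp
  then have "sg_elem H j + (sg_elem H (i + 1) - sg_elem H i)
      = sg_elem H j + sg_elem H (i + 1) - sg_elem H i"
    by linarith
  ultimately show False using assms by simp
qed

lemma ideal_sg_binomial_ideal:
  assumes gap: "sg_elem H (i + 1) - sg_elem H i \<notin> H"
  shows "ideal (sg_binomial_ideal H i (c :: 'k::field)) (sg_ring H)"
proof (rule ideal_sg_ringI)
  let ?g = "sg_binomial H i c"
  note tail = ideal_sg_ringD[OF ideal_sg_ideal_I[of "i + 2"]]
  show "sg_binomial_ideal H i c \<subseteq> sg_carrier H"
    unfolding sg_binomial_ideal_def using tail(1) sg_binomial_in_carrier
    by (auto intro!: sg_carrier_add sg_carrier_mult sg_carrier_const)
  show "0 \<in> sg_binomial_ideal H i c" using sg_ideal_I_subset_sg_binomial_ideal tail(2) by blast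
  show "x + y \<in> sg_binomial_ideal H i c"
    if x: "x \<in> sg_binomial_ideal H i c" and y: "y \<in> sg_binomial_ideal H i c" for x y
  proof -
    obtain \<mu> \<nu> where "x - fps_const \<mu> * ?g \<in> sg_ideal_I H (i + 2)"
      and "y - fps_const \<nu> * ?g \<in> sg_ideal_I H (i + 2)"
      using x y unfolding in_sg_binomial_ideal_iff by blast
    from tail(3)[OF this] have "x + y - fps_const (\<mu> + \<nu>) * ?g \<in> sg_ideal_I H (i + 2)"
      by (simp del: fps_const_add add: fps_const_add[symmetric] algebra_simps)
    then show ?thesis unfolding in_sg_binomial_ideal_iff by blast
  qed
  show "r * x \<in> sg_binomial_ideal H i c"
    if r: "r \<in> sg_carrier H" and x: "x \<in> sg_binomial_ideal H i c" for r x
  proof (rule mult_in_sg_binomial_ideal[OF x])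
    have "(r - fps_const (r $ 0)) * ?g \<in> sg_carrier H"
      using r by (intro sg_carrier_mult sg_carrier_diff sg_carrier_const sg_binomial_in_carrier)
    moreover have "r $ (sg_elem H (i + 1) - sg_elem H i) = 0"
      using r gap by (auto simp: sg_carrier_def)
    ultimately show "(r - fps_const (r $ 0)) * ?g \<in> sg_ideal_I H (i + 2)"
      by (rule sg_binomial_multiple_in_sg_ideal_I)
    show "r * y \<in> sg_ideal_I H (i + 2)" if "y \<in> sg_ideal_I H (i + 2)" for y
      using tail(4)[OF r that] .
  qed
qed

text \<open>A multiplier with a nonzero coefficient at \<open>a\<^sub>i\<^sub>+\<^sub>1 - a\<^sub>i\<close> would move
  \<open>t\<^bsup>a\<^sub>j\<^esup> \<in> I\<^sub>i\<^sub>+\<^sub>2\<close> onto the gap \<open>a\<^sub>j + a\<^sub>i\<^sub>+\<^sub>1 - a\<^sub>i\<close>.\<close>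
lemma lin_hom_sg_binomial_ideal_is_mult:
  assumes n: "1 \<le> sg_n H" and j: "i + 2 \<le> j" "j \<le> sg_n H"
    and not_in: "sg_elem H j + sg_elem H (i + 1) - sg_elem H i \<notin> H"
    and \<phi>: "\<phi> \<in> lin_hom (sg_ring H) (sg_ideal_module H (sg_binomial_ideal H i c))
      (sg_self_module H)"
  obtains q :: "'k::field fps"
  where "\<And>y. y \<in> sg_binomial_ideal H i c \<Longrightarrow> \<phi> y = q * y"
    and "q $ (sg_elem H (i + 1) - sg_elem H i) = 0"
proof -
  let ?J = "sg_binomial_ideal H i c"
  have ideal: "ideal ?J (sg_ring H)"
    using sg_elem_diff_notin[OF not_in] by (rule ideal_sg_binomial_ideal)
  have "sg_ideal_I H (sg_n H) \<subseteq> sg_ideal_I H (i + 2)" using j by (intro sg_ideal_I_antimono) simp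
  then have "sg_ideal_I H (sg_n H) \<subseteq> ?J" using sg_ideal_I_subset_sg_binomial_ideal by blast
  then obtain q where q: "\<And>y. y \<in> ?J \<Longrightarrow> \<phi> y = q * y"
    using lin_hom_is_mult[OF n ideal_sg_ringD(1)[OF ideal] _ \<phi>] by blast
  define d where "d = sg_elem H (i + 1) - sg_elem H i"
  have d: "sg_elem H j + d = sg_elem H j + sg_elem H (i + 1) - sg_elem H i"
    unfolding d_def using sg_elem_less_iff[of i "i + 1"] by simp
  have "sg_elem H j \<in> sg_ge H (i + 2)" using j sg_elem_in by (simp add: sg_ge_def)
  then have "fps_X ^ sg_elem H j \<in> ?J"
    using sg_ideal_I_subset_sg_binomial_ideal X_power_in_sg_ideal_I by blast
  then have "q * fps_X ^ sg_elem H j \<in> sg_carrier H"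
    using \<phi> q by (simp add: lin_hom_ideal_module_iff)
  moreover have "(q * fps_X ^ sg_elem H j) $ (sg_elem H j + d) = q $ d"
    by (simp add: fps_X_power_mult_right_nth)
  ultimately have "q $ d = 0" using not_in unfolding d by (auto simp: sg_carrier_def)
  with q that show thesis unfolding d_def by blast
qed

lemma hom_closed_sg_binomial_ideal:
  assumes n: "1 \<le> sg_n H" and j: "i + 2 \<le> j" "j \<le> sg_n H"
    and not_in: "sg_elem H j + sg_elem H (i + 1) - sg_elem H i \<notin> H"
  shows "hom_closed H (sg_binomial_ideal H i (c :: 'k::field))"
  unfolding hom_closed_def
proof (intro ballI image_subsetI)
  let ?J = "sg_binomial_ideal H i c" and ?g = "sg_binomial H i c"
  fix \<phi> :: "'k fps \<Rightarrow> 'k fps" and x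
  assume \<phi>: "\<phi> \<in> lin_hom (sg_ring H) (sg_ideal_module H ?J) (sg_self_module H)" and x: "x \<in> ?J"
  obtain q where q: "\<And>y. y \<in> ?J \<Longrightarrow> \<phi> y = q * y" and q_d: "q $ (sg_elem H (i + 1) - sg_elem H i) = 0"
    using lin_hom_sg_binomial_ideal_is_mult[OF n j not_in \<phi>] by blast
  have mult_in: "q * y \<in> sg_carrier H" if "y \<in> ?J" for y
    using \<phi> that q[OF that, symmetric] by (simp add: lin_hom_ideal_module_iff)
  have "(q - fps_const (q $ 0)) * ?g = q * ?g - fps_const (q $ 0) * ?g" by (simp add: algebra_simps)
  also have "\<dots> \<in> sg_carrier H"
    by (intro sg_carrier_diff[OF mult_in[OF sg_binomial_in_sg_binomial_ideal]] sg_carrier_mult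
        sg_carrier_const sg_binomial_in_carrier)
  finally have "(q - fps_const (q $ 0)) * ?g \<in> sg_ideal_I H (i + 2)"
    using q_d by (rule sg_binomial_multiple_in_sg_ideal_I)
  moreover have "q * y \<in> sg_ideal_I H (i + 2)" if "y \<in> sg_ideal_I H (i + 2)" for y
    using that sg_ideal_I_subset_sg_binomial_ideal by (intro sg_ideal_I_mult mult_in) blast+
  ultimately have "q * x \<in> ?J" by (rule mult_in_sg_binomial_ideal[OF x])
  then show "\<phi> x \<in> ?J" using q[OF x] by simp
qed

lemma sg_binomial_ideal_in_sg_calT:
  assumes n: "1 \<le> sg_n H" and j: "i + 2 \<le> j" "j \<le> sg_n H"
    and not_in: "sg_elem H j + sg_elem H (i + 1) - sg_elem H i \<notin> H"
  shows "sg_binomial_ideal H i (c :: 'k::field) \<in> sg_calT H"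
  unfolding sg_calT_iff
proof (intro conjI)
  show "ideal (sg_binomial_ideal H i c) (sg_ring H)"
    using sg_elem_diff_notin[OF not_in] by (rule ideal_sg_binomial_ideal)
  show "hom_closed H (sg_binomial_ideal H i c)"
    using n j not_in by (rule hom_closed_sg_binomial_ideal)
  have "sg_binomial H i c $ sg_elem H i \<noteq> 0" by (simp add: sg_binomial_nth)
  then have "sg_binomial H i c \<noteq> 0" by (metis fps_zero_nth)
  then show "sg_binomial_ideal H i c \<noteq> {0}" using sg_binomial_in_sg_binomial_ideal by blast
qed

lemma sg_binomial_ideal_notin_sg_calI:
  assumes "c \<noteq> 0"
  shows "sg_binomial_ideal H i (c :: 'k::field) \<notin> sg_calI H"
proof
  assume "sg_binomial_ideal H i c \<in> sg_calI H"
  then obtain l where eq: "sg_binomial_ideal H i c = sg_ideal_I H l" unfolding sg_calI_def by blast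
  show False
  proof (cases "l \<le> i")
    case True
    have "fps_X ^ sg_elem H i \<in> sg_ideal_I H l"
      using sg_ideal_I_antimono[OF True] X_power_sg_elem_in_sg_ideal_I by blast
    then have "(fps_X ^ sg_elem H i :: 'k fps) \<in> sg_binomial_ideal H i c" using eq by simp
    from sg_binomial_ideal_coeff[OF this] show False using assms by (simp add: fps_X_power_iff)
  next
    case False
    have "sg_binomial H i c \<in> sg_ideal_I H l" using eq sg_binomial_in_sg_binomial_ideal by blast
    moreover have "sg_elem H i < sg_elem H l" using False by simp
    ultimately have "sg_binomial H i c $ sg_elem H i = 0" unfolding sg_ideal_I_iff_vanishes by blast
    then show False by (simp add: sg_binomial_nth)
  qed
qed

lemma inj_sg_binomial_ideal: "inj (sg_binomial_ideal H i :: 'k::field \<Rightarrow> 'k fps set)"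
proof (rule injI)
  fix c c' :: 'k
  assume "sg_binomial_ideal H i c = sg_binomial_ideal H i c'"
  then have "sg_binomial H i c \<in> sg_binomial_ideal H i c'"
    using sg_binomial_in_sg_binomial_ideal by blast
  from sg_binomial_ideal_coeff[OF this] show "c = c'" by (simp add: sg_binomial_nth)
qed

lemma finite_sg_calI: "finite (sg_calI H :: 'k::field fps set set)"
proof -
  have "(sg_calI H :: 'k fps set set) = sg_ideal_I H ` {..sg_n H}" unfolding sg_calI_def by auto
  then show ?thesis by simp
qed

lemma obtain_step_condition_failure:
  assumes "\<not> sg_step_condition H"
  obtains i j where "i + 2 \<le> j" "j \<le> sg_n H" "sg_elem H j + sg_elem H (i + 1) - sg_elem H i \<notin> H"
  using assms unfolding sg_step_condition_def by auto

lemma sg_calT_eq_sg_calI_iff: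
  assumes n: "1 \<le> sg_n H"
  shows "(sg_calT H :: 'k::field fps set set) = sg_calI H \<longleftrightarrow> sg_step_condition H"
proof
  assume eq: "(sg_calT H :: 'k fps set set) = sg_calI H"
  show "sg_step_condition H"
  proof (rule ccontr)
    assume "\<not> sg_step_condition H"
    then obtain i j where "i + 2 \<le> j" "j \<le> sg_n H"
      and "sg_elem H j + sg_elem H (i + 1) - sg_elem H i \<notin> H"
      by (rule obtain_step_condition_failure)
    then have "sg_binomial_ideal H i (1 :: 'k) \<in> sg_calT H"
      using n by (intro sg_binomial_ideal_in_sg_calT)
    moreover have "sg_binomial_ideal H i (1 :: 'k) \<notin> sg_calI H"
      by (rule sg_binomial_ideal_notin_sg_calI) simp
    ultimately show False using eq by simp
  qed
next
  assume cond: "sg_step_condition H"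
  show "(sg_calT H :: 'k fps set set) = sg_calI H"
  proof
    show "sg_calT H \<subseteq> (sg_calI H :: 'k fps set set)"
    proof
      fix J :: "'k fps set" assume "J \<in> sg_calT H"
      then have "ideal J (sg_ring H)" "J \<noteq> {0}" "hom_closed H J" unfolding sg_calT_iff by simp_all
      then obtain l where "l \<le> sg_n H" "J = sg_ideal_I H l"
        by (rule hom_closed_ideal_eq_sg_ideal_I[OF cond])
      then show "J \<in> sg_calI H" unfolding sg_calI_def by blast
    qed
    show "sg_calI H \<subseteq> (sg_calT H :: 'k fps set set)"
      unfolding sg_calI_def using sg_ideal_I_in_sg_calT[OF n] by blast
  qed
qed

lemma infinite_sg_calT:
  assumes n: "1 \<le> sg_n H" and cond: "\<not> sg_step_condition H"
    and k: "infinite (UNIV :: 'k::field set)"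
  shows "infinite (sg_calT H :: 'k fps set set)"
proof -
  obtain i j where "i + 2 \<le> j" "j \<le> sg_n H" "sg_elem H j + sg_elem H (i + 1) - sg_elem H i \<notin> H"
    using cond by (rule obtain_step_condition_failure)
  then have "sg_binomial_ideal H i c \<in> sg_calT H" for c :: 'k
    using n by (intro sg_binomial_ideal_in_sg_calT)
  then have "range (sg_binomial_ideal H i :: 'k \<Rightarrow> 'k fps set) \<subseteq> sg_calT H" by blast
  moreover have "inj (sg_binomial_ideal H i :: 'k \<Rightarrow> 'k fps set)" by (rule inj_sg_binomial_ideal)
  then have "infinite (range (sg_binomial_ideal H i :: 'k \<Rightarrow> 'k fps set))"
    using k by (simp add: finite_image_iff)
  ultimately show ?thesis by (rule infinite_super)
qed

end

theorem theorem4p1: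
  fixes H :: "nat set"
  assumes "numerical_semigroup H"
    and "sg_n H \<ge> 3"
  shows "((sg_calT H :: 'k::field fps set set) = sg_calI H
            \<longleftrightarrow> (\<forall>i \<in> {1..sg_n H - 2}.
                  ideal_prod (sg_ring H) (sg_ideal_I H i) (sg_ideal_I H (i + 2))
                  = (\<lambda>x. fps_X ^ sg_elem H i * x) ` (sg_ideal_I H (i + 2) :: 'k fps set)))
       \<and> ((\<forall>i \<in> {1..sg_n H - 2}.
                  ideal_prod (sg_ring H) (sg_ideal_I H i) (sg_ideal_I H (i + 2))
                  = (\<lambda>x. fps_X ^ sg_elem H i * x) ` (sg_ideal_I H (i + 2) :: 'k fps set))
            \<longleftrightarrow> (\<forall>i \<in> {1..sg_n H - 2}. \<forall>j \<in> {i + 2..sg_n H}.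
                  sg_elem H j + sg_elem H (i + 1) - sg_elem H i \<in> H))
       \<and> (infinite (UNIV :: 'k set) \<longrightarrow>
            ((sg_calT H :: 'k fps set set) = sg_calI H \<longleftrightarrow> finite (sg_calT H :: 'k fps set set)))"
proof -
  interpret num_semigroup H by (rule num_semigroup.intro) fact
  have n: "1 \<le> sg_n H" using assms(2) by simp
  have products: "(\<forall>i \<in> {1..sg_n H - 2}.
                  ideal_prod (sg_ring H) (sg_ideal_I H i) (sg_ideal_I H (i + 2))
                  = (\<lambda>x. fps_X ^ sg_elem H i * x) ` (sg_ideal_I H (i + 2) :: 'k fps set))
      \<longleftrightarrow> sg_step_condition H"
    by (simp only: ideal_prod_sg_ideal_I_iff sg_step_condition_iff)
  have finite_iff: "sg_step_condition H \<longleftrightarrow> finite (sg_calT H :: 'k fps set set)"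
    if "infinite (UNIV :: 'k set)"
    using sg_calT_eq_sg_calI_iff[OF n, where 'k = 'k] finite_sg_calI[where 'k = 'k]
      infinite_sg_calT[OF n _ that]
    by auto
  show ?thesis
    unfolding products sg_calT_eq_sg_calI_iff[OF n, where 'k = 'k] sg_step_condition_def[symmetric]
    using finite_iff by blast
qed

end
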